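(* Let $\rho$ be a density operator on a finite-dimensional Hilbert space, $H$ a Hermitian operator, and $\rho_\theta=e^{-i\theta H}\rho\,e^{i\theta H}$. Then $$\mathcal{I}(\rho_\theta)=\partial_\theta^2 D_{HS}(\rho,\rho_\theta)\Big|_{\theta=0},$$ where $D_{HS}(A,B)=\mathrm{Tr}[(A-B)^2]$.
   Context: The sub-QFI is $\mathcal{I}(\rho_\theta)=8\lim_{\delta\to 0}\frac{1-\sqrt{G(\rho_\theta,\rho_{\theta+\delta})}}{\delta^2}$, where for density operators $\rho,\sigma$ the super-fidelity is $G(\rho,\sigma)=\mathrm{Tr}[\rho\sigma]+\sqrt{(1-\mathrm{Tr}[\rho^2])(1-\mathrm{Tr}[\sigma^2])}$. *)

theory Defs
  imports "HOL-Analysis.Analysis"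
begin

definition cmat_adj :: "complex^'n^'n \<Rightarrow> complex^'n^'n" where
  "cmat_adj A = (\<chi> i j. cnj (A $ j $ i))"

definition hermitian :: "complex^'n^'n \<Rightarrow> bool" where
  "hermitian A \<longleftrightarrow> cmat_adj A = A"

definition positive_semidef :: "complex^'n^'n \<Rightarrow> bool" where
  "positive_semidef A \<longleftrightarrow> hermitian A \<and>
     (\<forall>v::complex^'n. 0 \<le> Re ((\<Sum>i\<in>UNIV. \<Sum>j\<in>UNIV. cnj (v $ i) * A $ i $ j * v $ j)))"

definition density_operator :: "complex^'n^'n \<Rightarrow> bool" where
  "density_operator \<rho> \<longleftrightarrow> positive_semidef \<rho> \<and> trace \<rho> = 1"

fun mpow :: "complex^'n^'n \<Rightarrow> nat \<Rightarrow> complex^'n^'n" where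
  "mpow A 0 = mat 1"
| "mpow A (Suc k) = A ** mpow A k"

definition mexp :: "complex^'n^'n \<Rightarrow> complex^'n^'n" where
  "mexp A = (\<Sum>k. (1 / fact k :: real) *\<^sub>R mpow A k)"

definition cscale :: "complex \<Rightarrow> complex^'n^'n \<Rightarrow> complex^'n^'n" where
  "cscale c A = (\<chi> i j. c * A $ i $ j)"

definition rot_state :: "complex^'n^'n \<Rightarrow> complex^'n^'n \<Rightarrow> real \<Rightarrow> complex^'n^'n" where
  "rot_state \<rho> H \<theta> =
     mexp (cscale (- \<i> * complex_of_real \<theta>) H) ** \<rho> ** mexp (cscale (\<i> * complex_of_real \<theta>) H)"

text \<open>Super-fidelity G(rho,sigma) = Tr[rho sigma] + sqrt((1-Tr rho^2)(1-Tr sigma^2)).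
 The traces are real for Hermitian arguments; we take real parts.\<close>
definition super_fidelity :: "complex^'n^'n \<Rightarrow> complex^'n^'n \<Rightarrow> real" where
  "super_fidelity \<rho> \<sigma> = Re (trace (\<rho> ** \<sigma>)) +
     sqrt ((1 - Re (trace (\<rho> ** \<rho>))) * (1 - Re (trace (\<sigma> ** \<sigma>))))"

definition D_HS :: "complex^'n^'n \<Rightarrow> complex^'n^'n \<Rightarrow> real" where
  "D_HS A B = Re (trace ((A - B) ** (A - B)))"

text \<open>The quotient whose limit (delta -> 0) defines the sub-QFI at theta.\<close>
definition subQFI_quot :: "(real \<Rightarrow> complex^'n^'n) \<Rightarrow> real \<Rightarrow> real \<Rightarrow> real" where
  "subQFI_quot \<rho>f \<theta> \<delta> = 8 * (1 - sqrt (super_fidelity (\<rho>f \<theta>) (\<rho>f (\<theta> + \<delta>)))) / \<delta>^2"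

end

theory Submission
  imports Defs
begin

text \<open>Put \<open>\<rho>_s = exp(sK) \<rho> exp(-sK)\<close> with \<open>K = -iH\<close>. By cyclicity of the
  trace, \<open>Tr(\<rho>_s\<^sup>2) = Tr(\<rho>\<^sup>2) =: p\<close> and
  \<open>Tr(\<rho>_\<theta> \<rho>_(\<theta>+\<delta>)) = Tr(\<rho> \<rho>_\<delta>) =: f(\<delta>)\<close>. Hence
  \<open>D_HS(\<rho>, \<rho>_s) = 2p - 2f(s)\<close>, and as \<open>p \<le> 1\<close> for a density operator,
  the super-fidelity is \<open>G(\<rho>_\<theta>, \<rho>_(\<theta>+\<delta>)) = 1 + f(\<delta>) - f(0)\<close>.
  Moreover \<open>f'(0) = Tr([\<rho>,K] \<rho>) = 0\<close>, so by l'Hopital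
  \<open>(f(\<delta>) - f(0))/\<delta>\<^sup>2\<close> tends to \<open>f''(0)/2\<close>, and the sub-QFI quotient
  tends to \<open>-2 f''(0)\<close>, the second derivative of \<open>D_HS(\<rho>, \<rho>_s)\<close> at \<open>s = 0\<close>.

  The matrix exponential is the exponential of a Banach algebra: matrices act as
  bounded operators on \<open>complex^'n\<close>, and a type copy of these operators carries
  the multiplication that HOL-Analysis does not define on \<open>blinfun\<close>.\<close>

section \<open>Bounded operators as a Banach algebra\<close>

typedef (overloaded) ('n::finite) endo = "UNIV :: ((complex^'n) \<Rightarrow>\<^sub>L (complex^'n)) set"
  morphisms blinfun_of_endo endo_of_blinfun
  by simp

setup_lifting type_definition_endo

instantiation endo :: (finite) real_normed_algebra_1
begin

lift_definition zero_endo :: "'a endo" is 0 .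
lift_definition one_endo :: "'a endo" is id_blinfun .
lift_definition plus_endo :: "'a endo \<Rightarrow> 'a endo \<Rightarrow> 'a endo" is "(+)" .
lift_definition minus_endo :: "'a endo \<Rightarrow> 'a endo \<Rightarrow> 'a endo" is "(-)" .
lift_definition uminus_endo :: "'a endo \<Rightarrow> 'a endo" is uminus .
lift_definition times_endo :: "'a endo \<Rightarrow> 'a endo \<Rightarrow> 'a endo" is "(o\<^sub>L)" .
lift_definition scaleR_endo :: "real \<Rightarrow> 'a endo \<Rightarrow> 'a endo" is scaleR .
lift_definition norm_endo :: "'a endo \<Rightarrow> real" is norm .

definition dist_endo :: "'a endo \<Rightarrow> 'a endo \<Rightarrow> real"
  where "dist_endo X Y = norm (X - Y)"

definition sgn_endo :: "'a endo \<Rightarrow> 'a endo"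
  where "sgn_endo X = inverse (norm X) *\<^sub>R X"

definition uniformity_endo :: "('a endo \<times> 'a endo) filter"
  where "uniformity_endo = (INF e\<in>{0<..}. principal {(X, Y). dist X Y < e})"

definition open_endo :: "'a endo set \<Rightarrow> bool"
  where "open_endo S = (\<forall>X\<in>S. \<forall>\<^sub>F (X', Y) in uniformity. X' = X \<longrightarrow> Y \<in> S)"

instance
proof
  show "(0::'a endo) \<noteq> 1"
    by transfer (metis norm_blinfun_id norm_zero zero_neq_one)
qed (unfold dist_endo_def sgn_endo_def uniformity_endo_def open_endo_def,
    (rule refl | transfer; force simp: algebra_simps blinfun.add_left blinfun.add_right
      blinfun.diff_left blinfun.diff_right blinfun.scaleR_left blinfun.scaleR_right
      norm_triangle_ineq norm_blinfun_compose intro!: blinfun_eqI)+)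

end

instance endo :: (finite) banach
proof
  fix X :: "nat \<Rightarrow> ('n::finite) endo"
  assume "Cauchy X"
  then have "Cauchy (\<lambda>k. blinfun_of_endo (X k))"
    unfolding Cauchy_iff by (simp add: norm_endo.rep_eq minus_endo.rep_eq)
  then obtain L where "(\<lambda>k. blinfun_of_endo (X k)) \<longlonglongrightarrow> L"
    using Cauchy_convergent convergent_def by blast
  then have "X \<longlonglongrightarrow> endo_of_blinfun L"
    unfolding LIMSEQ_iff by (simp add: norm_endo.rep_eq minus_endo.rep_eq endo_of_blinfun_inverse)
  then show "convergent X"
    unfolding convergent_def by blast
qed

lemma endo_eqI:
  "(\<And>x. blinfun_apply (blinfun_of_endo X) x = blinfun_apply (blinfun_of_endo Y) x) \<Longrightarrow> X = Y"
  by (metis blinfun_eqI blinfun_of_endo_inject)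

definition endo_of_matrix :: "complex^'n^'n \<Rightarrow> ('n::finite) endo" where
  "endo_of_matrix A = endo_of_blinfun (Blinfun (\<lambda>x. A *v x))"

definition matrix_of_endo :: "('n::finite) endo \<Rightarrow> complex^'n^'n" where
  "matrix_of_endo X = matrix (blinfun_apply (blinfun_of_endo X))"

lemma blinfun_apply_endo_of_matrix [simp]:
  "blinfun_apply (blinfun_of_endo (endo_of_matrix A)) = (\<lambda>x. A *v x)"
  by (simp add: endo_of_matrix_def endo_of_blinfun_inverse bounded_linear_Blinfun_apply)

lemma matrix_of_endo_of_matrix [simp]: "matrix_of_endo (endo_of_matrix A) = A"
  by (simp add: matrix_of_endo_def)

lemma endo_of_matrix_inject: "endo_of_matrix A = endo_of_matrix B \<longleftrightarrow> A = B"
  by (metis matrix_of_endo_of_matrix)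

lemma endo_of_matrix_mult: "endo_of_matrix (A ** B) = endo_of_matrix A * endo_of_matrix B"
  by (rule endo_eqI) (simp add: times_endo.rep_eq matrix_vector_mul_assoc)

lemma endo_of_matrix_one: "endo_of_matrix (mat 1) = 1"
  by (rule endo_eqI) (simp add: one_endo.rep_eq)

lemma endo_of_matrix_mpow: "endo_of_matrix (mpow A k) = endo_of_matrix A ^ k"
  by (induction k) (simp_all add: endo_of_matrix_one endo_of_matrix_mult)

lemma endo_of_matrix_add: "endo_of_matrix (A + B) = endo_of_matrix A + endo_of_matrix B"
  by (rule endo_eqI) (simp add: plus_endo.rep_eq blinfun.add_left matrix_vector_mult_add_rdistrib)

lemma endo_of_matrix_scaleR: "endo_of_matrix (r *\<^sub>R A) = r *\<^sub>R endo_of_matrix A"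
  by (rule endo_eqI)
    (simp add: scaleR_endo.rep_eq blinfun.scaleR_left vec_eq_iff matrix_vector_mult_def scaleR_sum_right)

lemma bounded_linear_endo_of_matrix: "bounded_linear endo_of_matrix"
  unfolding linear_conv_bounded_linear[symmetric]
  by (rule linearI) (simp_all add: endo_of_matrix_add endo_of_matrix_scaleR)

lemma bounded_linear_vec_lambda:
  assumes "\<And>i. bounded_linear (f i)"
  shows "bounded_linear (\<lambda>x. \<chi> i. f i x)"
proof -
  obtain K where K: "\<And>i x. norm (f i x) \<le> norm x * K i"
    using bounded_linear.bounded[OF assms] by metis
  show ?thesis
  proof (rule bounded_linear_intro[where K = "\<Sum>i\<in>UNIV. K i"])
    show "(\<chi> i. f i (x + y)) = (\<chi> i. f i x) + (\<chi> i. f i y)" for x y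
      by (simp add: vec_eq_iff linear_simps(1)[OF assms])
    show "(\<chi> i. f i (r *\<^sub>R x)) = r *\<^sub>R (\<chi> i. f i x)" for r x
      by (simp add: vec_eq_iff linear_simps(5)[OF assms])
    have "norm (\<chi> i. f i x) \<le> (\<Sum>i\<in>UNIV. norm (f i x))" for x
      unfolding norm_vec_def by (simp add: L2_set_le_sum)
    also have "\<dots> x \<le> (\<Sum>i\<in>UNIV. norm x * K i)" for x
      by (intro sum_mono K)
    finally show "norm (\<chi> i. f i x) \<le> norm x * (\<Sum>i\<in>UNIV. K i)" for x
      by (simp add: sum_distrib_left)
  qed
qed

lemma bounded_linear_matrix_of_endo: "bounded_linear matrix_of_endo"
  unfolding matrix_of_endo_def matrix_def
  by (intro bounded_linear_vec_lambda bounded_linear_compose[OF bounded_linear_vec_nth]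
      bounded_linear_compose[OF blinfun.bounded_linear_left])
    (rule bounded_linear_intro[where K = 1],
      simp_all add: plus_endo.rep_eq scaleR_endo.rep_eq norm_endo.rep_eq)

lemma exp_series_endo_of_matrix:
  "endo_of_matrix A ^ k /\<^sub>R fact k = endo_of_matrix ((1 / fact k :: real) *\<^sub>R mpow A k)"
  by (simp add: endo_of_matrix_scaleR endo_of_matrix_mpow divide_inverse)

lemma sums_exp_endo_of_matrix:
  "(\<lambda>k. endo_of_matrix ((1 / fact k :: real) *\<^sub>R mpow A k)) sums exp (endo_of_matrix A)"
  unfolding exp_series_endo_of_matrix[symmetric] exp_def
  by (rule summable_sums) (rule summable_exp_generic)

lemma endo_of_matrix_mexp: "endo_of_matrix (mexp A) = exp (endo_of_matrix A)"
proof -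
  have "(\<lambda>k. (1 / fact k :: real) *\<^sub>R mpow A k) sums matrix_of_endo (exp (endo_of_matrix A))"
    using bounded_linear.sums[OF bounded_linear_matrix_of_endo sums_exp_endo_of_matrix] by simp
  then have "(\<lambda>k. (1 / fact k :: real) *\<^sub>R mpow A k) sums mexp A"
    unfolding mexp_def by (simp add: sums_iff)
  from bounded_linear.sums[OF bounded_linear_endo_of_matrix this]
  show ?thesis
    using sums_exp_endo_of_matrix by (rule sums_unique2)
qed

section \<open>The matrix exponential and conjugation flows\<close>

lemmas endo_of_matrix_linear_simps = linear_simps[OF bounded_linear_endo_of_matrix]

lemma mexp_zero: "mexp 0 = mat 1"
  by (simp add: endo_of_matrix_inject[symmetric] endo_of_matrix_mexp endo_of_matrix_one
      endo_of_matrix_linear_simps)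

lemma mexp_add_commuting:
  assumes "A ** B = B ** A"
  shows "mexp (A + B) = mexp A ** mexp B"
proof -
  have "endo_of_matrix A * endo_of_matrix B = endo_of_matrix B * endo_of_matrix A"
    using assms by (simp flip: endo_of_matrix_mult)
  then show ?thesis
    by (simp add: endo_of_matrix_inject[symmetric] endo_of_matrix_mexp endo_of_matrix_mult
        endo_of_matrix_linear_simps exp_add_commuting)
qed

lemma mexp_minus_inverse: "mexp A ** mexp (- A) = mat 1"
  by (simp add: endo_of_matrix_inject[symmetric] endo_of_matrix_mexp endo_of_matrix_mult
      endo_of_matrix_one endo_of_matrix_linear_simps exp_minus_inverse)

lemma mexp_minus_cancel_left: "mexp (- A) ** (mexp A ** X) = X"
  using mexp_minus_inverse[of "- A"] by (simp add: matrix_mul_assoc)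

lemma mexp_scaleR_add: "mexp ((s + t) *\<^sub>R K) = mexp (s *\<^sub>R K) ** mexp (t *\<^sub>R K)"
proof -
  have "(s *\<^sub>R K) ** (t *\<^sub>R K) = (t *\<^sub>R K) ** (s *\<^sub>R K)"
    by (simp add: matrix_matrix_mult_def vec_eq_iff scaleR_conv_of_real[where 'a = complex]
        algebra_simps)
  then show ?thesis
    by (simp add: scaleR_add_left mexp_add_commuting)
qed

lemma matrix_diff_ldistrib: "(A::'a::comm_ring_1^'n^'m) ** (B - C) = A ** B - A ** C"
  by (simp add: vec_eq_iff matrix_matrix_mult_def sum_subtractf right_diff_distrib)

lemma matrix_diff_rdistrib: "((A::'a::comm_ring_1^'n^'m) - B) ** C = A ** C - B ** C"
  by (simp add: vec_eq_iff matrix_matrix_mult_def sum_subtractf left_diff_distrib)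

definition conj_flow :: "complex^'n^'n \<Rightarrow> complex^'n^'n \<Rightarrow> real \<Rightarrow> complex^'n^'n" where
  "conj_flow K X s = mexp (s *\<^sub>R K) ** X ** mexp (- (s *\<^sub>R K))"

lemma rot_state_conj_flow: "rot_state \<rho> H s = conj_flow (cscale (- \<i>) H) \<rho> s"
proof -
  have "cscale (- \<i> * complex_of_real s) H = s *\<^sub>R cscale (- \<i>) H"
    and "cscale (\<i> * complex_of_real s) H = - (s *\<^sub>R cscale (- \<i>) H)"
    by (simp_all add: cscale_def vec_eq_iff scaleR_conv_of_real[where 'a = complex])
  then show ?thesis
    by (simp add: rot_state_def conj_flow_def)
qed

lemma conj_flow_zero [simp]: "conj_flow K X 0 = X"
  by (simp add: conj_flow_def mexp_zero)

lemma conj_flow_mult: "conj_flow K X s ** conj_flow K Y s = conj_flow K (X ** Y) s"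
  by (simp add: conj_flow_def matrix_mul_assoc[symmetric] mexp_minus_cancel_left)

lemma conj_flow_add: "conj_flow K X (s + t) = conj_flow K (conj_flow K X t) s"
proof -
  have "mexp ((s + t) *\<^sub>R K) = mexp (s *\<^sub>R K) ** mexp (t *\<^sub>R K)"
    and "mexp (- ((s + t) *\<^sub>R K)) = mexp (- (t *\<^sub>R K)) ** mexp (- (s *\<^sub>R K))"
    using mexp_scaleR_add[of s t K] mexp_scaleR_add[of t s "- K"] by (simp_all add: add.commute)
  then show ?thesis
    by (simp add: conj_flow_def matrix_mul_assoc)
qed

lemma trace_conj_flow: "trace (conj_flow K X s) = trace X"
  unfolding conj_flow_def trace_mul_sym[of _ "mexp (- (s *\<^sub>R K))"]
  by (simp add: mexp_minus_cancel_left)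

lemma trace_conj_flow_mult_shift:
  "trace (conj_flow K X t ** conj_flow K X (t + d)) = trace (X ** conj_flow K X d)"
  by (simp add: conj_flow_add[of K X t d] conj_flow_mult trace_conj_flow)

lemma trace_square_diff_conj_flow:
  "trace ((X - conj_flow K X s) ** (X - conj_flow K X s)) =
    2 * trace (X ** X) - 2 * trace (X ** conj_flow K X s)"
proof -
  let ?Y = "conj_flow K X s"
  have "trace ((X - ?Y) ** (X - ?Y)) =
      trace (X ** X) - trace (X ** ?Y) - trace (?Y ** X) + trace (?Y ** ?Y)"
    by (simp add: matrix_diff_ldistrib matrix_diff_rdistrib trace_sub)
  then show ?thesis
    by (simp add: conj_flow_mult trace_conj_flow trace_mul_sym[of ?Y X])
qed

lemma trace_commutator_mult_self: "trace ((X ** K - K ** X) ** X) = (0::'a::comm_ring_1)"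
proof -
  have "trace (X ** K ** X) = trace (K ** X ** X)"
    by (metis matrix_mul_assoc trace_mul_sym)
  then show ?thesis
    by (simp add: matrix_diff_rdistrib trace_sub)
qed

lemma has_vector_derivative_exp_conj:
  fixes K X :: "'a::{real_normed_algebra_1,banach}"
  shows "((\<lambda>s. exp (s *\<^sub>R K) * X * exp (- (s *\<^sub>R K))) has_vector_derivative
      K * (exp (t *\<^sub>R K) * X * exp (- (t *\<^sub>R K))) -
      exp (t *\<^sub>R K) * X * exp (- (t *\<^sub>R K)) * K) (at t)"
  unfolding scaleR_minus_right[symmetric]
  by (rule has_vector_derivative_eq_rhs,
      (rule has_vector_derivative_mult has_vector_derivative_mult_left
        exp_scaleR_has_vector_derivative_left exp_scaleR_has_vector_derivative_right)+)
    (simp add: algebra_simps)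

lemma has_vector_derivative_conj_flow:
  "(conj_flow K X has_vector_derivative K ** conj_flow K X t - conj_flow K X t ** K) (at t)"
proof -
  let ?E = endo_of_matrix
  define F where "F s = exp (s *\<^sub>R ?E K) * ?E X * exp (- (s *\<^sub>R ?E K))" for s
  have endo_flow: "?E (conj_flow K X s) = F s" for s
    by (simp add: F_def conj_flow_def endo_of_matrix_mult endo_of_matrix_mexp
        endo_of_matrix_linear_simps)
  have "((\<lambda>s. matrix_of_endo (F s)) has_vector_derivative
      matrix_of_endo (?E K * F t - F t * ?E K)) (at t)"
    unfolding F_def
    by (rule bounded_linear.has_vector_derivative[OF bounded_linear_matrix_of_endo
          has_vector_derivative_exp_conj])
  moreover have "matrix_of_endo (F s) = conj_flow K X s" for s
    by (metis endo_flow matrix_of_endo_of_matrix)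
  moreover have
    "matrix_of_endo (?E K * F t - F t * ?E K) = K ** conj_flow K X t - conj_flow K X t ** K"
    by (simp flip: endo_flow endo_of_matrix_mult endo_of_matrix_linear_simps)
  ultimately show ?thesis
    by simp
qed

lemma bounded_linear_Re_trace_mult_left:
  "bounded_linear (\<lambda>M::complex^'n^'n. Re (trace (Y ** M)))"
  unfolding linear_conv_bounded_linear[symmetric]
  by (rule linearI)
    (simp_all add: trace_def matrix_matrix_mult_def scaleR_conv_of_real[where 'a = complex]
      sum_distrib_left sum.distrib algebra_simps)

lemma has_real_derivative_trace_conj_flow:
  "((\<lambda>s. Re (trace (Y ** conj_flow K X s))) has_real_derivative
      Re (trace ((Y ** K - K ** Y) ** conj_flow K X t))) (at t)"
proof -
  let ?Z = "conj_flow K X t"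
  have "trace (Y ** (K ** ?Z - ?Z ** K)) = trace ((Y ** K - K ** Y) ** ?Z)"
    by (simp add: matrix_diff_ldistrib matrix_diff_rdistrib trace_sub matrix_mul_assoc
        trace_mul_sym[of "Y ** ?Z" K])
  then show ?thesis
    using bounded_linear.has_vector_derivative[OF bounded_linear_Re_trace_mult_left[of Y]
        has_vector_derivative_conj_flow[of K X t]]
    by (simp add: has_real_derivative_iff_has_vector_derivative)
qed

section \<open>Two limits of real functions\<close>

lemma tendsto_second_order_quotient:
  fixes f f' :: "real \<Rightarrow> real"
  assumes f: "\<And>t. (f has_real_derivative f' t) (at t)"
    and f'_0: "f' 0 = 0"
    and f': "(f' has_real_derivative c) (at 0)"
  shows "((\<lambda>d. (f d - f 0) / d^2) \<longlongrightarrow> c / 2) (at 0)"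
proof (rule lhopital[where f' = f' and g' = "\<lambda>d. 2 * d"])
  have "isCont f 0"
    using f by (rule DERIV_isCont)
  then show "((\<lambda>d. f d - f 0) \<longlongrightarrow> 0) (at 0)"
    by (simp add: isCont_def LIM_zero)
  show "((\<lambda>d::real. d^2) \<longlongrightarrow> 0) (at 0)"
    by (auto intro!: tendsto_eq_intros)
  show "\<forall>\<^sub>F d in at 0. (d::real)^2 \<noteq> 0" "\<forall>\<^sub>F d in at 0. 2 * (d::real) \<noteq> 0"
    by (simp_all add: eventually_at_filter)
  show "\<forall>\<^sub>F d in at 0. ((\<lambda>d. f d - f 0) has_real_derivative f' d) (at d)"
  proof (rule always_eventually, intro allI)
    show "((\<lambda>d. f d - f 0) has_real_derivative f' d) (at d)" for d
      using DERIV_diff[OF f[of d] DERIV_const] by simp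
  qed
  have "((\<lambda>d. d^2) has_real_derivative 2 * d) (at d)" for d :: real
    by (rule derivative_eq_intros refl | simp)+
  then show "\<forall>\<^sub>F d in at 0. ((\<lambda>d. d^2) has_real_derivative 2 * d) (at d)"
    by simp
  have "((\<lambda>d. f' d / d) \<longlongrightarrow> c) (at 0)"
    using f' f'_0 by (simp add: has_field_derivative_iff)
  then have "((\<lambda>d. f' d / d / 2) \<longlongrightarrow> c / 2) (at 0)"
    by (rule tendsto_divide) simp_all
  then show "((\<lambda>d. f' d / (2 * d)) \<longlongrightarrow> c / 2) (at 0)"
    by (simp add: divide_divide_eq_left' mult.commute)
qed

lemma tendsto_one_minus_sqrt_quotient:
  fixes h :: "real \<Rightarrow> real"
  assumes h: "((\<lambda>d. h d / d^2) \<longlongrightarrow> a) (at 0)"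
  shows "((\<lambda>d. (1 - sqrt (1 + h d)) / d^2) \<longlongrightarrow> - a / 2) (at 0)"
proof -
  have nonzero: "\<forall>\<^sub>F d in at (0::real). d \<noteq> 0"
    by (simp add: eventually_at_filter)
  have "((\<lambda>d. h d / d^2 * d^2) \<longlongrightarrow> a * 0^2) (at 0)"
    by (intro tendsto_intros h)
  moreover have "\<forall>\<^sub>F d in at 0. h d / d^2 * d^2 = h d"
    using nonzero by eventually_elim simp
  ultimately have "(h \<longlongrightarrow> 0) (at 0)"
    by (simp add: Lim_transform_eventually)
  then have "\<forall>\<^sub>F d in at 0. h d > -1"
    by (rule order_tendstoD) simp
  with nonzero have "\<forall>\<^sub>F d in at 0. - (h d / d^2) / (1 + sqrt (1 + h d)) = (1 - sqrt (1 + h d)) / d^2"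
  proof eventually_elim
    case (elim d)
    then have "(1 - sqrt (1 + h d)) * (1 + sqrt (1 + h d)) = - h d"
      by (simp add: algebra_simps)
    moreover have "1 + sqrt (1 + h d) > 0"
      using elim by (smt (verit) real_sqrt_ge_zero)
    ultimately have "1 - sqrt (1 + h d) = - h d / (1 + sqrt (1 + h d))"
      by (metis nonzero_mult_div_cancel_right less_irrefl)
    then show ?case
      by (simp add: divide_divide_eq_left')
  qed
  moreover have
    "((\<lambda>d. - (h d / d^2) / (1 + sqrt (1 + h d))) \<longlongrightarrow> - a / (1 + sqrt (1 + 0))) (at 0)"
    by (intro tendsto_intros h \<open>(h \<longlongrightarrow> 0) (at 0)\<close>) simp
  ultimately show ?thesis
    by (simp add: Lim_transform_eventually)
qed

section \<open>Purity of density operators\<close>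

lemma hermitian_entry: "hermitian A \<Longrightarrow> A $ j $ i = cnj (A $ i $ j)"
  unfolding hermitian_def cmat_adj_def by (metis vec_lambda_beta)

lemma quadratic_form_axis_pair:
  fixes A :: "complex^'n^'n" and i j :: 'n and x y :: complex
  defines "v \<equiv> axis i x + axis j y"
  shows "(\<Sum>k\<in>UNIV. \<Sum>l\<in>UNIV. cnj (v $ k) * A $ k $ l * v $ l) =
    cnj x * A $ i $ i * x + cnj x * A $ i $ j * y + cnj y * A $ j $ i * x + cnj y * A $ j $ j * y"
proof -
  have v: "v $ l = (if l = i then x else 0) + (if l = j then y else 0)" for l
    by (simp add: v_def axis_def)
  have row: "(\<Sum>l\<in>UNIV. A $ k $ l * v $ l) = A $ k $ i * x + A $ k $ j * y" for k
    by (simp add: v distrib_left sum.distrib if_distrib[of "\<lambda>z. A $ k $ _ * z"] cong: if_cong)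
  have "(\<Sum>k\<in>UNIV. \<Sum>l\<in>UNIV. cnj (v $ k) * A $ k $ l * v $ l) =
      (\<Sum>k\<in>UNIV. cnj (v $ k) * (A $ k $ i * x + A $ k $ j * y))"
    by (simp add: mult.assoc sum_distrib_left flip: row)
  also have "\<dots> = cnj x * (A $ i $ i * x + A $ i $ j * y) + cnj y * (A $ j $ i * x + A $ j $ j * y)"
    by (simp add: v distrib_right sum.distrib if_distrib[of cnj] if_distrib[of "\<lambda>z. z * _"]
        cong: if_cong)
  finally show ?thesis
    by (simp add: algebra_simps)
qed

lemma nonneg_quadratic_imp_le:
  fixes a b m :: real
  assumes Q: "\<And>\<alpha> \<beta>. 0 \<le> \<alpha>^2 * a - 2 * \<alpha> * \<beta> * m + \<beta>^2 * m * b"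
    and "0 \<le> b"
  shows "m \<le> a * b"
proof (cases "b = 0")
  case True
  show ?thesis
  proof (rule ccontr)
    assume "\<not> m \<le> a * b"
    then have "m > 0"
      using True by simp
    have "0 \<le> 1^2 * a - 2 * 1 * ((a + 1) / (2 * m)) * m + ((a + 1) / (2 * m))^2 * m * b"
      by (rule Q)
    also have "\<dots> = -1"
      using \<open>m > 0\<close> True by (simp add: field_simps)
    finally show False
      by simp
  qed
next
  case False
  with \<open>0 \<le> b\<close> have "b > 0"
    by simp
  have "0 \<le> b^2 * a - 2 * b * 1 * m + 1^2 * m * b"
    by (rule Q)
  also have "\<dots> = b * (a * b - m)"
    by (simp add: algebra_simps power2_eq_square)
  finally show ?thesis
    using \<open>b > 0\<close> by (simp add: zero_le_mult_iff)
qed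

lemma positive_semidef_entry_bound:
  fixes A :: "complex^'n^'n"
  assumes "positive_semidef A"
  shows "(cmod (A $ i $ j))^2 \<le> Re (A $ i $ i) * Re (A $ j $ j)"
proof -
  have herm: "hermitian A"
    and psd: "\<And>v. 0 \<le> Re (\<Sum>k\<in>UNIV. \<Sum>l\<in>UNIV. cnj (v $ k) * A $ k $ l * v $ l)"
    using assms unfolding positive_semidef_def by auto
  have diag: "A $ k $ k = complex_of_real (Re (A $ k $ k))" for k
    using hermitian_entry[OF herm, of k k] by (metis Reals_cnj_iff of_real_Re)
  define c where "c = A $ i $ j"
  have "0 \<le> \<alpha>^2 * Re (A $ i $ i) - 2 * \<alpha> * \<beta> * (cmod c)^2 + \<beta>^2 * (cmod c)^2 * Re (A $ j $ j)"
    for \<alpha> \<beta>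
  proof -
    let ?v = "axis i (complex_of_real \<alpha>) + axis j (- \<beta> * cnj c)"
    have "0 \<le> Re (\<Sum>k\<in>UNIV. \<Sum>l\<in>UNIV. cnj (?v $ k) * A $ k $ l * ?v $ l)"
      by (rule psd)
    also have "\<dots> =
        \<alpha>^2 * Re (A $ i $ i) - 2 * \<alpha> * \<beta> * (cmod c)^2 + \<beta>^2 * (cmod c)^2 * Re (A $ j $ j)"
      unfolding quadratic_form_axis_pair hermitian_entry[OF herm, where i = i and j = j]
        cmod_power2
      by (subst (1 2) diag) (simp add: c_def[symmetric] algebra_simps power2_eq_square)
    finally show ?thesis .
  qed
  moreover have "0 \<le> Re (A $ j $ j)"
    using psd[of "axis j 1 + axis j 0", unfolded quadratic_form_axis_pair] by simp
  ultimately show ?thesis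
    unfolding c_def by (rule nonneg_quadratic_imp_le)
qed

lemma trace_square_hermitian:
  assumes "hermitian A"
  shows "Re (trace (A ** A)) = (\<Sum>i\<in>UNIV. \<Sum>j\<in>UNIV. (cmod (A $ i $ j))^2)"
proof -
  have "Re (A $ i $ j * A $ j $ i) = (cmod (A $ i $ j))^2" for i j
    using hermitian_entry[OF assms, where i = i and j = j] unfolding cmod_power2
    by (simp add: power2_eq_square)
  then show ?thesis
    by (simp add: trace_def matrix_matrix_mult_def)
qed

lemma positive_semidef_trace_square_le:
  assumes "positive_semidef A"
  shows "Re (trace (A ** A)) \<le> (Re (trace A))^2"
proof -
  have "Re (trace (A ** A)) = (\<Sum>i\<in>UNIV. \<Sum>j\<in>UNIV. (cmod (A $ i $ j))^2)"
    using assms unfolding positive_semidef_def by (simp add: trace_square_hermitian)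
  also have "\<dots> \<le> (\<Sum>i\<in>UNIV. \<Sum>j\<in>UNIV. Re (A $ i $ i) * Re (A $ j $ j))"
    by (intro sum_mono positive_semidef_entry_bound[OF assms])
  also have "\<dots> = (Re (trace A))^2"
    by (simp add: trace_def power2_eq_square sum_product)
  finally show ?thesis .
qed

lemma density_operator_purity_le_one:
  assumes "density_operator \<rho>"
  shows "Re (trace (\<rho> ** \<rho>)) \<le> 1"
  using assms positive_semidef_trace_square_le unfolding density_operator_def by fastforce

lemma super_fidelity_conj_flow:
  assumes "density_operator \<rho>"
  shows "super_fidelity (conj_flow K \<rho> t) (conj_flow K \<rho> (t + d)) =
    1 + Re (trace (\<rho> ** conj_flow K \<rho> d)) - Re (trace (\<rho> ** \<rho>))"
  using density_operator_purity_le_one[OF assms]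
  by (simp add: super_fidelity_def trace_conj_flow_mult_shift conj_flow_mult trace_conj_flow)

theorem proposition2:
  fixes \<rho> H :: "complex^'n^'n" and \<theta> :: real
  assumes "density_operator \<rho>"
    and "hermitian H"
  shows "\<exists>L D'.
           (\<forall>t. ((\<lambda>s. D_HS \<rho> (rot_state \<rho> H s)) has_real_derivative D' t) (at t))
         \<and> (D' has_real_derivative L) (at 0)
         \<and> (subQFI_quot (rot_state \<rho> H) \<theta> \<longlongrightarrow> L) (at 0)"
proof -
  define K where "K = cscale (- \<i>) H"
  define C where "C = \<rho> ** K - K ** \<rho>"
  define f where "f s = Re (trace (\<rho> ** conj_flow K \<rho> s))" for s
  define f' where "f' s = Re (trace (C ** conj_flow K \<rho> s))" for s
  define c where "c = Re (trace ((C ** K - K ** C) ** \<rho>))"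
  have f: "(f has_real_derivative f' t) (at t)" for t
    unfolding f_def f'_def C_def by (rule has_real_derivative_trace_conj_flow)
  have f': "(f' has_real_derivative c) (at 0)"
    using has_real_derivative_trace_conj_flow[of C K \<rho> 0] by (simp add: f'_def[abs_def] c_def)
  have "f' 0 = 0"
    by (simp add: f'_def C_def trace_commutator_mult_self)
  have D_HS: "D_HS \<rho> (rot_state \<rho> H s) = 2 * f 0 - 2 * f s" for s
    by (simp add: D_HS_def f_def rot_state_conj_flow K_def trace_square_diff_conj_flow)
  have quot:
    "subQFI_quot (rot_state \<rho> H) \<theta> = (\<lambda>d. 8 * ((1 - sqrt (1 + (f d - f 0))) / d^2))"
    using super_fidelity_conj_flow[OF assms(1)]
    by (simp add: subQFI_quot_def fun_eq_iff f_def rot_state_conj_flow K_def)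
  show ?thesis
  proof (intro exI conjI allI)
    show "((\<lambda>s. D_HS \<rho> (rot_state \<rho> H s)) has_real_derivative -2 * f' t) (at t)" for t
      unfolding D_HS by (auto intro!: derivative_eq_intros f)
    show "((\<lambda>t. -2 * f' t) has_real_derivative -2 * c) (at 0)"
      by (auto intro!: derivative_eq_intros f')
    have "((\<lambda>d. (f d - f 0) / d^2) \<longlongrightarrow> c / 2) (at 0)"
      using f \<open>f' 0 = 0\<close> f' by (rule tendsto_second_order_quotient)
    then show "(subQFI_quot (rot_state \<rho> H) \<theta> \<longlongrightarrow> -2 * c) (at 0)"
      unfolding quot using tendsto_mult_left[OF tendsto_one_minus_sqrt_quotient, of _ "c / 2" 8]
      by simp
  qed
qed

end
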